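(* Let $X$ be a complex Banach space and let $T\in L(X)$ be a B-Fredholm operator. Let $S\in L(X)$ be a Drazin inverse of $T$ modulo the ideal $F_0(X)$ of finite rank operators, i.e. $\pi(S)$ is the Drazin inverse of $\pi(T)$ in $L(X)/F_0(X)$, where $\pi:L(X)\to L(X)/F_0(X)$ is the canonical projection. Then $TS-ST$ is a finite rank operator and $$\operatorname{ind}(T)=\tau(TS-ST),$$ where $\operatorname{ind}(T)$ is the usual index of the B-Fredholm operator $T$ and $\tau$ is the trace of finite rank operators.
   Context: $L(X)$ denotes the algebra of bounded linear operators on $X$. An operator $T\in L(X)$ is B-Fredholm if there is $n\in\mathbb{N}$ such that the range $R(T^n)$ is closed and the restriction $T_n:R(T^n)\to R(T^n)$ of $T$ is a Fredholm operator; then $T_m$ is Fredholm with the same index for all $m\ge n$, and the index of $T$ is defined as $\operatorname{ind}(T)=\operatorname{ind}(T_n)$ (the usual Fredholm index $\dim\ker-\operatorname{codim}$ range). An element $x$ of an algebra $B$ is Drazin invertible if there exist $y\in B$ and $k\ge1$ with $xy=yx$, $yxy=y$, $x^kyx=x^k$; $y$ is then unique and called the Drazin inverse of $x$. For a finite rank operator $F$ written as $F(x)=\sum_{i=1}^n x_i'(x)x_i$ with $x_1,\dots,x_n$ a basis of $R(F)$ and $x_1',\dots,x_n'$ continuous linear functionals on $X$, its trace is $\tau(F)=\sum_{i=1}^n x_i'(x_i)$. *)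

theory Defs
  imports "HOL-Analysis.Analysis"
begin

class complex_normed_vector = real_normed_vector +
  fixes scaleC :: "complex \<Rightarrow> 'a \<Rightarrow> 'a" (infixr \<open>*\<^sub>C\<close> 75)
  assumes scaleC_add_right: "a *\<^sub>C (x + y) = a *\<^sub>C x + a *\<^sub>C y"
    and scaleC_add_left: "(a + b) *\<^sub>C x = a *\<^sub>C x + b *\<^sub>C x"
    and scaleC_scaleC: "a *\<^sub>C (b *\<^sub>C x) = (a * b) *\<^sub>C x"
    and scaleC_one: "1 *\<^sub>C x = x"
    and scaleC_of_real: "of_real r *\<^sub>C x = r *\<^sub>R x"
    and norm_scaleC: "norm (a *\<^sub>C x) = cmod a * norm x"

definition cspan :: "'a::complex_normed_vector set \<Rightarrow> 'a set" where
  "cspan = module.span scaleC"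

definition cindependent :: "'a::complex_normed_vector set \<Rightarrow> bool" where
  "cindependent B = (\<not> module.dependent scaleC B)"

definition cdim :: "'a::complex_normed_vector set \<Rightarrow> nat" where
  "cdim = vector_space.dim scaleC"

definition cbounded_linear :: "('a::complex_normed_vector \<Rightarrow> 'a) \<Rightarrow> bool" where
  "cbounded_linear T \<longleftrightarrow> bounded_linear T \<and> (\<forall>c x. T (c *\<^sub>C x) = c *\<^sub>C T x)"

definition cbounded_functional :: "('a::complex_normed_vector \<Rightarrow> complex) \<Rightarrow> bool" where
  "cbounded_functional f \<longleftrightarrow> bounded_linear f \<and> (\<forall>c x. f (c *\<^sub>C x) = c * f x)"

definition finite_rank :: "('a::complex_normed_vector \<Rightarrow> 'a) \<Rightarrow> bool" where
  "finite_rank F \<longleftrightarrow> cbounded_linear F \<and> (\<exists>B. finite B \<and> range F \<subseteq> cspan B)"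

text \<open>Codimension of a subspace R inside M: the least number of vectors whose span
  together with R gives M (= complex dimension of M/R).\<close>

definition codim_in :: "'a::complex_normed_vector set \<Rightarrow> 'a set \<Rightarrow> nat" where
  "codim_in M R = (LEAST d. \<exists>C. finite C \<and> card C = d \<and> M = {r + c |r c. r \<in> R \<and> c \<in> cspan C})"

definition fredholm_on :: "'a::complex_normed_vector set \<Rightarrow> ('a \<Rightarrow> 'a) \<Rightarrow> bool" where
  "fredholm_on M T \<longleftrightarrow> T ` M \<subseteq> M \<and>
     (\<exists>B. finite B \<and> cspan B = {x \<in> M. T x = 0}) \<and>
     closed (T ` M) \<and>
     (\<exists>C. finite C \<and> M = {r + c |r c. r \<in> T ` M \<and> c \<in> cspan C})"

definition index_on :: "'a::complex_normed_vector set \<Rightarrow> ('a \<Rightarrow> 'a) \<Rightarrow> int" where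
  "index_on M T = int (cdim {x \<in> M. T x = 0}) - int (codim_in M (T ` M))"

definition B_fredholm :: "('a::complex_normed_vector \<Rightarrow> 'a) \<Rightarrow> bool" where
  "B_fredholm T \<longleftrightarrow> cbounded_linear T \<and>
     (\<exists>n. closed (range (T ^^ n)) \<and> fredholm_on (range (T ^^ n)) T)"

definition B_index :: "('a::complex_normed_vector \<Rightarrow> 'a) \<Rightarrow> int" where
  "B_index T = index_on (range (T ^^ (LEAST n. closed (range (T ^^ n)) \<and> fredholm_on (range (T ^^ n)) T))) T"

text \<open>pi(S) is the Drazin inverse of pi(T) in L(X)/F_0(X), unfolded: pi(a) = pi(b) iff a - b
  is of finite rank.\<close>

definition drazin_inverse_mod_F0 :: "('a::complex_normed_vector \<Rightarrow> 'a) \<Rightarrow> ('a \<Rightarrow> 'a) \<Rightarrow> bool" where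
  "drazin_inverse_mod_F0 T S \<longleftrightarrow> cbounded_linear T \<and> cbounded_linear S \<and>
     finite_rank (\<lambda>x. T (S x) - S (T x)) \<and>
     finite_rank (\<lambda>x. S (T (S x)) - S x) \<and>
     (\<exists>k\<ge>1. finite_rank (\<lambda>x. (T ^^ k) (S (T x)) - (T ^^ k) x))"

definition frank_trace :: "('a::complex_normed_vector \<Rightarrow> 'a) \<Rightarrow> complex" where
  "frank_trace F = (SOME t. \<exists>n (xs :: nat \<Rightarrow> 'a) (fs :: nat \<Rightarrow> 'a \<Rightarrow> complex).
      inj_on xs {..<n} \<and> cindependent (xs ` {..<n}) \<and> cspan (xs ` {..<n}) = range F \<and>
      (\<forall>i<n. cbounded_functional (fs i)) \<and>
      (\<forall>x. F x = (\<Sum>i<n. fs i x *\<^sub>C xs i)) \<and>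
      t = (\<Sum>i<n. fs i (xs i)))"

end

theory Submission
  imports Defs
begin

text \<open>Modulo finite rank operators a Drazin inverse is unique, and replacing \<open>S\<close> by \<open>S + D\<close>
  with \<open>D\<close> of finite rank changes \<open>\<tau>(TS - ST)\<close> by \<open>\<tau>(TD) - \<tau>(DT) = 0\<close>. So it suffices to
  exhibit one Drazin inverse \<open>S\<^sub>0\<close> modulo \<open>F\<^sub>0(X)\<close> with the right trace. Let \<open>M = R(T\<^sup>n)\<close> with
  \<open>T\<^sub>n\<close> Fredholm. Splitting off the kernel and a complement of the range gives \<open>G\<close> with
  \<open>GT = I - P\<close> and \<open>TG = I - Q\<close> on \<open>M\<close>, where \<open>P\<close>, \<open>Q\<close> are finite rank projections of
  traces \<open>dim N(T\<^sub>n)\<close> and \<open>codim R(T\<^sub>n)\<close>. Then \<open>S\<^sub>0 = G\<^sup>n\<^sup>+\<^sup>1 T\<^sup>n\<close> is a Drazin inverse modulo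
  \<open>F\<^sub>0(X)\<close>, and \<open>TS\<^sub>0 - S\<^sub>0T = G\<^sup>nPT\<^sup>n - QG\<^sup>nT\<^sup>n\<close> has trace \<open>\<tau>(P) - \<tau>(Q) = ind(T)\<close>.
  The argument is purely algebraic; continuity of the coordinate functionals on finite dimensional
  subspaces only serves to identify the algebraic trace with \<open>frank_trace\<close>.\<close>

interpretation cvs: vector_space "scaleC :: complex \<Rightarrow> 'a::complex_normed_vector \<Rightarrow> 'a"
  by unfold_locales (simp_all add: scaleC_add_right scaleC_add_left scaleC_scaleC scaleC_one)

lemma vector_space_complex_mult: "vector_space ((*) :: complex \<Rightarrow> complex \<Rightarrow> complex)"
  by unfold_locales (simp_all add: algebra_simps)

interpretation clin: vector_space_pair "scaleC :: complex \<Rightarrow> 'a::complex_normed_vector \<Rightarrow> 'a"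
  "scaleC :: complex \<Rightarrow> 'a \<Rightarrow> 'a" ..

interpretation cfun: vector_space_pair "scaleC :: complex \<Rightarrow> 'a::complex_normed_vector \<Rightarrow> 'a"
  "(*) :: complex \<Rightarrow> complex \<Rightarrow> complex"
  by (intro vector_space_pair.intro cvs.vector_space_axioms vector_space_complex_mult)

abbreviation clinear :: "('a::complex_normed_vector \<Rightarrow> 'a) \<Rightarrow> bool" where
  "clinear \<equiv> Vector_Spaces.linear scaleC scaleC"

abbreviation cfunctional :: "('a::complex_normed_vector \<Rightarrow> complex) \<Rightarrow> bool" where
  "cfunctional \<equiv> Vector_Spaces.linear scaleC (*)"

lemma clinear_iff: "clinear f \<longleftrightarrow> (\<forall>x y. f (x + y) = f x + f y) \<and> (\<forall>c x. f (c *\<^sub>C x) = c *\<^sub>C f x)"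
  using cvs.vector_space_axioms by (auto simp: Vector_Spaces.linear_iff)

lemma cfunctional_iff: "cfunctional f \<longleftrightarrow> (\<forall>x y. f (x + y) = f x + f y) \<and> (\<forall>c x. f (c *\<^sub>C x) = c * f x)"
  using cvs.vector_space_axioms vector_space_complex_mult by (auto simp: Vector_Spaces.linear_iff)

lemma clinear_compose: "clinear f \<Longrightarrow> clinear g \<Longrightarrow> clinear (\<lambda>x. f (g x))"
  using Vector_Spaces.linear_compose[of scaleC scaleC g scaleC f] by (simp add: comp_def)

lemma clinear_funpow: "clinear f \<Longrightarrow> clinear (f ^^ n)"
  by (induction n) (simp_all add: cvs.linear_id Vector_Spaces.linear_compose)

lemma cbounded_linear_clinear: "cbounded_linear F \<Longrightarrow> clinear F"
  unfolding cbounded_linear_def clinear_iff using linear_add bounded_linear.linear by blast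

lemma cspan_eq: "cspan = cvs.span" by (simp add: cspan_def)

section \<open>Algebraic trace of finite rank operators\<close>

definition alg_finite_rank :: "('a::complex_normed_vector \<Rightarrow> 'a) \<Rightarrow> bool" where
  "alg_finite_rank F \<longleftrightarrow> clinear F \<and> (\<exists>B. finite B \<and> range F \<subseteq> cvs.span B)"

text \<open>\<open>rank_repr F n v f\<close> says \<open>F = \<Sum>i<n. f i \<otimes> v i\<close> with linear (not necessarily bounded)
  functionals \<open>f i\<close>; unlike in \<open>frank_trace\<close>, the vectors \<open>v i\<close> need not be independent.\<close>

definition rank_repr ::
    "('a::complex_normed_vector \<Rightarrow> 'a) \<Rightarrow> nat \<Rightarrow> (nat \<Rightarrow> 'a) \<Rightarrow> (nat \<Rightarrow> 'a \<Rightarrow> complex) \<Rightarrow> bool" where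
  "rank_repr F n v f \<longleftrightarrow> (\<forall>i<n. cfunctional (f i)) \<and> (\<forall>x. F x = (\<Sum>i<n. f i x *\<^sub>C v i))"

definition alg_trace :: "('a::complex_normed_vector \<Rightarrow> 'a) \<Rightarrow> complex" where
  "alg_trace F = (SOME t. \<exists>n v f. rank_repr F n v f \<and> t = (\<Sum>i<n. f i (v i)))"

lemma sum_lessThan_add: "(\<Sum>i<n + (m::nat). h i) = (\<Sum>i<n. h i) + (\<Sum>i<m. h (n + i))"
  by (induction m) (simp_all add: add.assoc)

lemma rank_repr_zero_trace:
  assumes "rank_repr (\<lambda>_. 0) n v f"
  shows "(\<Sum>i<n. f i (v i)) = 0"
proof -
  obtain E where E: "E \<subseteq> v ` {..<n}" "cvs.independent E" "v ` {..<n} \<subseteq> cvs.span E"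
    using cvs.maximal_independent_subset by blast
  have finE: "finite E" using E(1) finite_subset by blast
  define r where "r i = cvs.representation E (v i)" for i
  have v: "v i = (\<Sum>e\<in>E. r i e *\<^sub>C e)" if "i < n" for i
    unfolding r_def using E that finE by (intro cvs.sum_representation_eq[symmetric]) auto
  have f: "cfunctional (f i)" if "i < n" for i using assms that by (simp add: rank_repr_def)
  have coeff: "(\<Sum>i<n. f i x * r i e) = 0" if "e \<in> E" for x e
  proof -
    have "0 = (\<Sum>i<n. f i x *\<^sub>C v i)" using assms by (simp add: rank_repr_def)
    also have "\<dots> = (\<Sum>i<n. \<Sum>e\<in>E. (f i x * r i e) *\<^sub>C e)"
      by (rule sum.cong) (auto simp: v cvs.scale_sum_right)
    also have "\<dots> = (\<Sum>e\<in>E. (\<Sum>i<n. f i x * r i e) *\<^sub>C e)"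
      by (subst sum.swap) (simp add: cvs.scale_sum_left)
    finally show ?thesis
      using cvs.independentD[OF E(2) finE order_refl _ that] by simp
  qed
  have "(\<Sum>i<n. f i (v i)) = (\<Sum>i<n. \<Sum>e\<in>E. f i e * r i e)"
    by (rule sum.cong) (auto simp: v f cfun.linear_sum cfun.linear_scale mult.commute)
  also have "\<dots> = 0" by (subst sum.swap) (simp add: coeff)
  finally show ?thesis .
qed

lemma rank_repr_add:
  assumes "rank_repr F n v f" "rank_repr H m w g"
  shows "rank_repr (\<lambda>x. F x + H x) (n + m)
           (\<lambda>i. if i < n then v i else w (i - n)) (\<lambda>i. if i < n then f i else g (i - n))"
  using assms by (auto simp: rank_repr_def sum_lessThan_add)

lemma rank_repr_neg: "rank_repr F n v f \<Longrightarrow> rank_repr (\<lambda>x. - F x) n v (\<lambda>i x. - f i x)"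
  by (auto simp: rank_repr_def cfun.linear_compose_neg sum_negf)

lemma rank_repr_trace_unique:
  assumes "rank_repr F n v f" "rank_repr F m w g"
  shows "(\<Sum>i<n. f i (v i)) = (\<Sum>i<m. g i (w i))"
proof -
  have "rank_repr (\<lambda>x. F x + - F x) (n + m)
      (\<lambda>i. if i < n then v i else w (i - n)) (\<lambda>i. if i < n then f i else (\<lambda>x. - g (i - n) x))"
    by (rule rank_repr_add[OF assms(1) rank_repr_neg[OF assms(2)]])
  from rank_repr_zero_trace[OF this[simplified]] show ?thesis
    by (simp add: sum_lessThan_add sum_negf)
qed

lemma alg_trace_eq:
  assumes "rank_repr F n v f"
  shows "alg_trace F = (\<Sum>i<n. f i (v i))"
proof -
  have "\<exists>n v f. rank_repr F n v f \<and> alg_trace F = (\<Sum>i<n. f i (v i))"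
    unfolding alg_trace_def by (rule someI_ex) (use assms in blast)
  then show ?thesis using rank_repr_trace_unique assms by metis
qed

lemma sum_representation_lessThan:
  assumes "cvs.independent E" "bij_betw h {..<card E} E" "u \<in> cvs.span E"
  shows "u = (\<Sum>i<card E. cvs.representation E u (h i) *\<^sub>C h i)"
proof -
  have "finite E"
    using assms(2) bij_betw_finite by blast
  then have "u = (\<Sum>e\<in>E. cvs.representation E u e *\<^sub>C e)"
    using assms by (intro cvs.sum_representation_eq[symmetric]) auto
  also have "\<dots> = (\<Sum>i<card E. cvs.representation E u (h i) *\<^sub>C h i)"
    using sum.reindex_bij_betw[OF assms(2), of "\<lambda>e. cvs.representation E u e *\<^sub>C e"] by simp
  finally show ?thesis .
qed

lemma cfunctional_representation:
  assumes "clinear F" "cvs.independent E" "range F \<subseteq> cvs.span E"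
  shows "cfunctional (\<lambda>x. cvs.representation E (F x) e)"
proof -
  have "F x \<in> cvs.span E" for x using assms(3) by auto
  then show ?thesis
    using assms(1,2) by (simp add: cfunctional_iff clin.linear_add clin.linear_scale
        cvs.representation_add cvs.representation_scale)
qed

lemma alg_finite_rank_repr:
  assumes "alg_finite_rank F"
  obtains n v f where "rank_repr F n v f"
proof -
  obtain B where B: "finite B" "range F \<subseteq> cvs.span B" and F: "clinear F"
    using assms by (auto simp: alg_finite_rank_def)
  obtain E where E: "E \<subseteq> B" "cvs.independent E" "B \<subseteq> cvs.span E"
    using cvs.maximal_independent_subset by blast
  have "range F \<subseteq> cvs.span E"
    using B(2) cvs.span_minimal[OF E(3) cvs.subspace_span] by blast
  moreover obtain h where h: "bij_betw h {..<card E} E"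
    using ex_bij_betw_nat_finite[of E] finite_subset[OF E(1) B(1)] by (auto simp: atLeast0LessThan)
  ultimately have "rank_repr F (card E) h (\<lambda>i x. cvs.representation E (F x) (h i))"
    using E(2) F by (auto simp: rank_repr_def cfunctional_representation intro: sum_representation_lessThan)
  then show thesis ..
qed

lemma rank_repr_compose_right:
  "rank_repr F n v f \<Longrightarrow> clinear L \<Longrightarrow> rank_repr (\<lambda>x. F (L x)) n v (\<lambda>i x. f i (L x))"
  using Vector_Spaces.linear_compose[of scaleC scaleC L "(*)"] by (auto simp: rank_repr_def comp_def)

lemma rank_repr_compose_left:
  "rank_repr F n v f \<Longrightarrow> clinear L \<Longrightarrow> rank_repr (\<lambda>x. L (F x)) n (\<lambda>i. L (v i)) f"
  by (auto simp: rank_repr_def clin.linear_sum clin.linear_scale)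

lemma alg_trace_commute:
  assumes "alg_finite_rank F" "clinear L"
  shows "alg_trace (\<lambda>x. F (L x)) = alg_trace (\<lambda>x. L (F x))"
proof -
  obtain n v f where F: "rank_repr F n v f" using alg_finite_rank_repr[OF assms(1)] .
  show ?thesis
    using alg_trace_eq[OF rank_repr_compose_right[OF F assms(2)]]
      alg_trace_eq[OF rank_repr_compose_left[OF F assms(2)]] by simp
qed

lemma alg_trace_add:
  assumes "alg_finite_rank F" "alg_finite_rank H"
  shows "alg_trace (\<lambda>x. F x + H x) = alg_trace F + alg_trace H"
proof -
  obtain n v f where F: "rank_repr F n v f" using alg_finite_rank_repr[OF assms(1)] .
  obtain m w g where H: "rank_repr H m w g" using alg_finite_rank_repr[OF assms(2)] .
  show ?thesis
    using alg_trace_eq[OF rank_repr_add[OF F H]] alg_trace_eq[OF F] alg_trace_eq[OF H]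
    by (simp add: sum_lessThan_add)
qed

lemma alg_trace_neg:
  assumes "alg_finite_rank F"
  shows "alg_trace (\<lambda>x. - F x) = - alg_trace F"
proof -
  obtain n v f where F: "rank_repr F n v f" using alg_finite_rank_repr[OF assms] .
  show ?thesis using alg_trace_eq[OF rank_repr_neg[OF F]] alg_trace_eq[OF F] by (simp add: sum_negf)
qed

lemma alg_finite_rank_zero: "alg_finite_rank (\<lambda>x. 0)"
  unfolding alg_finite_rank_def by (auto simp: clin.linear_zero intro!: exI[of _ "{}"] cvs.span_zero)

lemma alg_finite_rank_add:
  assumes "alg_finite_rank F" "alg_finite_rank H"
  shows "alg_finite_rank (\<lambda>x. F x + H x)"
proof -
  obtain B C where "finite B" "range F \<subseteq> cvs.span B" "finite C" "range H \<subseteq> cvs.span C"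
    using assms by (auto simp: alg_finite_rank_def)
  moreover have "cvs.span B \<subseteq> cvs.span (B \<union> C)" "cvs.span C \<subseteq> cvs.span (B \<union> C)"
    by (auto intro: cvs.span_mono[THEN subsetD])
  ultimately have "finite (B \<union> C) \<and> range (\<lambda>x. F x + H x) \<subseteq> cvs.span (B \<union> C)"
    by (blast intro: cvs.span_add)
  then show ?thesis
    using assms by (auto simp: alg_finite_rank_def clin.linear_compose_add)
qed

lemma alg_finite_rank_neg: "alg_finite_rank F \<Longrightarrow> alg_finite_rank (\<lambda>x. - F x)"
  unfolding alg_finite_rank_def by (auto simp: clin.linear_compose_neg intro: cvs.span_neg)

lemma alg_finite_rank_diff:
  "alg_finite_rank F \<Longrightarrow> alg_finite_rank H \<Longrightarrow> alg_finite_rank (\<lambda>x. F x - H x)"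
  using alg_finite_rank_add[OF _ alg_finite_rank_neg, of F H] by simp

lemma alg_trace_diff:
  "alg_finite_rank F \<Longrightarrow> alg_finite_rank H \<Longrightarrow> alg_trace (\<lambda>x. F x - H x) = alg_trace F - alg_trace H"
  using alg_trace_add[OF _ alg_finite_rank_neg, of F H] alg_trace_neg[of H] by simp

lemma alg_finite_rank_compose_right:
  "alg_finite_rank F \<Longrightarrow> clinear L \<Longrightarrow> alg_finite_rank (\<lambda>x. F (L x))"
  unfolding alg_finite_rank_def by (auto simp: clinear_compose)

lemma alg_finite_rank_compose_left:
  assumes "alg_finite_rank F" "clinear L"
  shows "alg_finite_rank (\<lambda>x. L (F x))"
proof -
  obtain B where "finite B" "range F \<subseteq> cvs.span B"
    using assms(1) by (auto simp: alg_finite_rank_def)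
  then have "finite (L ` B) \<and> range (\<lambda>x. L (F x)) \<subseteq> cvs.span (L ` B)"
    using clin.linear_span_image[OF assms(2), of B] by auto
  then show ?thesis
    using assms by (auto simp: alg_finite_rank_def clinear_compose)
qed

lemma alg_finite_rank_sum:
  "(\<And>i. i \<in> I \<Longrightarrow> alg_finite_rank (F i)) \<Longrightarrow> alg_finite_rank (\<lambda>x. \<Sum>i\<in>I. F i x)"
  by (induction I rule: infinite_finite_induct) (auto simp: alg_finite_rank_zero intro!: alg_finite_rank_add)

lemma alg_trace_sum:
  "finite I \<Longrightarrow> (\<And>i. i \<in> I \<Longrightarrow> alg_finite_rank (F i)) \<Longrightarrow>
    alg_trace (\<lambda>x. \<Sum>i\<in>I. F i x) = (\<Sum>i\<in>I. alg_trace (F i))"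
proof (induction I rule: finite_induct)
  case empty
  have "rank_repr (\<lambda>x. 0) 0 v f" for v f by (simp add: rank_repr_def)
  then show ?case using alg_trace_eq by fastforce
next
  case (insert a I)
  then show ?case by (simp add: alg_trace_add alg_finite_rank_sum)
qed

section \<open>Drazin inverses modulo finite rank operators\<close>

definition eq_mod_finite_rank :: "('a::complex_normed_vector \<Rightarrow> 'a) \<Rightarrow> ('a \<Rightarrow> 'a) \<Rightarrow> bool"
    (infix \<open>\<approx>\<^sub>F\<close> 50) where
  "a \<approx>\<^sub>F b \<longleftrightarrow> alg_finite_rank (\<lambda>x. a x - b x)"

lemma eq_mod_finite_rank_refl: "clinear a \<Longrightarrow> a \<approx>\<^sub>F a"
  by (simp add: eq_mod_finite_rank_def alg_finite_rank_zero)

lemma eq_mod_finite_rank_sym: "a \<approx>\<^sub>F b \<Longrightarrow> b \<approx>\<^sub>F a"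
  using alg_finite_rank_neg[of "\<lambda>x. a x - b x"] by (simp add: eq_mod_finite_rank_def)

lemma eq_mod_finite_rank_trans [trans]: "a \<approx>\<^sub>F b \<Longrightarrow> b \<approx>\<^sub>F c \<Longrightarrow> a \<approx>\<^sub>F c"
  using alg_finite_rank_add[of "\<lambda>x. a x - b x" "\<lambda>x. b x - c x"] by (simp add: eq_mod_finite_rank_def)

lemma eq_mod_finite_rank_subst [trans]:
  "a = b \<Longrightarrow> b \<approx>\<^sub>F c \<Longrightarrow> a \<approx>\<^sub>F c" "a \<approx>\<^sub>F b \<Longrightarrow> b = c \<Longrightarrow> a \<approx>\<^sub>F c"
  by simp_all

lemma eq_mod_finite_rank_compose_left: "a \<approx>\<^sub>F b \<Longrightarrow> clinear L \<Longrightarrow> L \<circ> a \<approx>\<^sub>F L \<circ> b"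
  using alg_finite_rank_compose_left[of "\<lambda>x. a x - b x" L]
  by (simp add: eq_mod_finite_rank_def clin.linear_diff)

lemma eq_mod_finite_rank_compose_right: "a \<approx>\<^sub>F b \<Longrightarrow> clinear R \<Longrightarrow> a \<circ> R \<approx>\<^sub>F b \<circ> R"
  using alg_finite_rank_compose_right[of "\<lambda>x. a x - b x" R] by (simp add: eq_mod_finite_rank_def)

lemma eq_mod_finite_rank_compose:
  "a \<approx>\<^sub>F b \<Longrightarrow> clinear L \<Longrightarrow> clinear R \<Longrightarrow> L \<circ> a \<circ> R \<approx>\<^sub>F L \<circ> b \<circ> R"
  using eq_mod_finite_rank_compose_left eq_mod_finite_rank_compose_right by blast

definition drazin_mod_finite_rank :: "('a::complex_normed_vector \<Rightarrow> 'a) \<Rightarrow> ('a \<Rightarrow> 'a) \<Rightarrow> nat \<Rightarrow> bool" where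
  "drazin_mod_finite_rank T S k \<longleftrightarrow> clinear T \<and> clinear S \<and>
     T \<circ> S \<approx>\<^sub>F S \<circ> T \<and> S \<circ> T \<circ> S \<approx>\<^sub>F S \<and> T ^^ k \<circ> S \<circ> T \<approx>\<^sub>F T ^^ k"

context
  fixes T S :: "'a::complex_normed_vector \<Rightarrow> 'a" and k :: nat
  assumes drazin: "drazin_mod_finite_rank T S k"
begin

private lemma linear_T: "clinear T" and linear_S: "clinear S"
  and commute: "T \<circ> S \<approx>\<^sub>F S \<circ> T" and inner: "S \<circ> T \<circ> S \<approx>\<^sub>F S"
  and index: "T ^^ k \<circ> S \<circ> T \<approx>\<^sub>F T ^^ k"
  using drazin by (simp_all add: drazin_mod_finite_rank_def)

lemma drazin_mod_finite_rank_commute_funpow: "S \<circ> T ^^ j \<approx>\<^sub>F T ^^ j \<circ> S"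
proof (induction j)
  case 0 show ?case using linear_S by (simp add: eq_mod_finite_rank_refl)
next
  case (Suc j)
  have "S \<circ> T ^^ Suc j = (S \<circ> T ^^ j) \<circ> T" by (rule ext) (simp add: funpow_swap1)
  also have "\<dots> \<approx>\<^sub>F (T ^^ j \<circ> S) \<circ> T" by (rule eq_mod_finite_rank_compose_right[OF Suc linear_T])
  also have "(T ^^ j \<circ> S) \<circ> T = T ^^ j \<circ> (S \<circ> T)" by (simp add: o_assoc)
  also have "\<dots> \<approx>\<^sub>F T ^^ j \<circ> (T \<circ> S)"
    by (rule eq_mod_finite_rank_compose_left[OF eq_mod_finite_rank_sym[OF commute] clinear_funpow[OF linear_T]])
  also have "T ^^ j \<circ> (T \<circ> S) = T ^^ Suc j \<circ> S" by (rule ext) (simp add: funpow_swap1)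
  finally show ?case .
qed

lemma drazin_mod_finite_rank_left: "S \<approx>\<^sub>F S ^^ Suc j \<circ> T ^^ j"
proof (induction j)
  case 0 show ?case using linear_S by (simp add: eq_mod_finite_rank_refl)
next
  case (Suc j)
  have "S \<approx>\<^sub>F S \<circ> T \<circ> S" by (rule eq_mod_finite_rank_sym[OF inner])
  also have "S \<circ> T \<circ> S = S \<circ> (T \<circ> S)" by (simp add: o_assoc)
  also have "\<dots> \<approx>\<^sub>F S \<circ> (S \<circ> T)" by (rule eq_mod_finite_rank_compose_left[OF commute linear_S])
  finally have SST: "S \<approx>\<^sub>F S \<circ> S \<circ> T" by (simp add: o_assoc)
  have "S \<approx>\<^sub>F S ^^ Suc j \<circ> T ^^ j" by (rule Suc)
  also have "S ^^ Suc j \<circ> T ^^ j = S ^^ j \<circ> S \<circ> T ^^ j" by (rule ext) (simp add: funpow_swap1)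
  also have "\<dots> \<approx>\<^sub>F S ^^ j \<circ> (S \<circ> S \<circ> T) \<circ> T ^^ j"
    by (rule eq_mod_finite_rank_compose[OF SST clinear_funpow[OF linear_S] clinear_funpow[OF linear_T]])
  also have "S ^^ j \<circ> (S \<circ> S \<circ> T) \<circ> T ^^ j = S ^^ Suc (Suc j) \<circ> T ^^ Suc j"
    by (rule ext) (simp add: funpow_swap1)
  finally show ?case .
qed

lemma drazin_mod_finite_rank_right: "S \<approx>\<^sub>F T ^^ j \<circ> S ^^ Suc j"
proof (induction j)
  case 0 show ?case using linear_S by (simp add: eq_mod_finite_rank_refl)
next
  case (Suc j)
  have "S \<approx>\<^sub>F S \<circ> T \<circ> S" by (rule eq_mod_finite_rank_sym[OF inner])
  also have "\<dots> \<approx>\<^sub>F T \<circ> S \<circ> S"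
    by (rule eq_mod_finite_rank_compose_right[OF eq_mod_finite_rank_sym[OF commute] linear_S])
  finally have TSS: "S \<approx>\<^sub>F T \<circ> S \<circ> S" .
  have "S \<approx>\<^sub>F T ^^ j \<circ> S ^^ Suc j" by (rule Suc)
  also have "T ^^ j \<circ> S ^^ Suc j = T ^^ j \<circ> S \<circ> S ^^ j" by (simp add: o_assoc)
  also have "\<dots> \<approx>\<^sub>F T ^^ j \<circ> (T \<circ> S \<circ> S) \<circ> S ^^ j"
    by (rule eq_mod_finite_rank_compose[OF TSS clinear_funpow[OF linear_T] clinear_funpow[OF linear_S]])
  also have "T ^^ j \<circ> (T \<circ> S \<circ> S) \<circ> S ^^ j = T ^^ Suc j \<circ> S ^^ Suc (Suc j)"
    by (rule ext) (simp add: funpow_swap1)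
  finally show ?case .
qed

lemma drazin_mod_finite_rank_funpow_right:
  assumes "k \<le> m" shows "T ^^ m \<approx>\<^sub>F T ^^ Suc m \<circ> S"
proof -
  have "T ^^ k \<approx>\<^sub>F T ^^ k \<circ> S \<circ> T" by (rule eq_mod_finite_rank_sym[OF index])
  also have "T ^^ k \<circ> S \<circ> T = T ^^ k \<circ> (S \<circ> T)" by (simp add: o_assoc)
  also have "\<dots> \<approx>\<^sub>F T ^^ k \<circ> (T \<circ> S)"
    by (rule eq_mod_finite_rank_compose_left[OF eq_mod_finite_rank_sym[OF commute] clinear_funpow[OF linear_T]])
  also have "T ^^ k \<circ> (T \<circ> S) = T ^^ Suc k \<circ> S" by (rule ext) (simp add: funpow_swap1)
  finally have base: "T ^^ k \<approx>\<^sub>F T ^^ Suc k \<circ> S" .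
  have "T ^^ m = T ^^ (m - k) \<circ> T ^^ k" using assms by (simp add: funpow_add[symmetric])
  also have "\<dots> \<approx>\<^sub>F T ^^ (m - k) \<circ> (T ^^ Suc k \<circ> S)"
    by (rule eq_mod_finite_rank_compose_left[OF base clinear_funpow[OF linear_T]])
  also have "T ^^ (m - k) \<circ> (T ^^ Suc k \<circ> S) = T ^^ Suc m \<circ> S"
    using assms by (metis comp_assoc funpow_add add_Suc_right le_add_diff_inverse2)
  finally show ?thesis .
qed

lemma drazin_mod_finite_rank_funpow_left:
  assumes "k \<le> m" shows "T ^^ m \<approx>\<^sub>F S \<circ> T ^^ Suc m"
proof -
  have "T ^^ k \<approx>\<^sub>F T ^^ k \<circ> S \<circ> T" by (rule eq_mod_finite_rank_sym[OF index])
  also have "\<dots> \<approx>\<^sub>F S \<circ> T ^^ k \<circ> T"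
    by (rule eq_mod_finite_rank_compose_right
        [OF eq_mod_finite_rank_sym[OF drazin_mod_finite_rank_commute_funpow] linear_T])
  also have "S \<circ> T ^^ k \<circ> T = S \<circ> T ^^ Suc k" by (rule ext) (simp add: funpow_swap1)
  finally have base: "T ^^ k \<approx>\<^sub>F S \<circ> T ^^ Suc k" .
  have "T ^^ m = T ^^ (m - k) \<circ> T ^^ k" using assms by (simp add: funpow_add[symmetric])
  also have "\<dots> \<approx>\<^sub>F (T ^^ (m - k) \<circ> S) \<circ> T ^^ Suc k"
    using eq_mod_finite_rank_compose_left[OF base clinear_funpow[OF linear_T]] by (simp add: o_assoc)
  also have "\<dots> \<approx>\<^sub>F (S \<circ> T ^^ (m - k)) \<circ> T ^^ Suc k"
    by (rule eq_mod_finite_rank_compose_right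
        [OF eq_mod_finite_rank_sym[OF drazin_mod_finite_rank_commute_funpow] clinear_funpow[OF linear_T]])
  also have "(S \<circ> T ^^ (m - k)) \<circ> T ^^ Suc k = S \<circ> T ^^ Suc m"
    using assms by (metis comp_assoc funpow_add add_Suc_right le_add_diff_inverse2)
  finally show ?thesis .
qed

end

lemma drazin_mod_finite_rank_unique:
  assumes S: "drazin_mod_finite_rank T S k" and S': "drazin_mod_finite_rank T S' l"
  shows "S \<approx>\<^sub>F S'"
proof -
  define m where "m = max k l"
  have T: "clinear T" and linear_S: "clinear S" and linear_S': "clinear S'"
    using S S' by (auto simp: drazin_mod_finite_rank_def)
  have "S \<approx>\<^sub>F S ^^ Suc m \<circ> T ^^ m" by (rule drazin_mod_finite_rank_left[OF S])
  also have "\<dots> \<approx>\<^sub>F S ^^ Suc m \<circ> (T ^^ Suc m \<circ> S')"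
    by (rule eq_mod_finite_rank_compose_left[OF drazin_mod_finite_rank_funpow_right[OF S']
          clinear_funpow[OF linear_S]]) (simp add: m_def)
  also have "S ^^ Suc m \<circ> (T ^^ Suc m \<circ> S') = (S ^^ Suc m \<circ> T ^^ m) \<circ> (T \<circ> S')"
    by (rule ext) (simp add: funpow_swap1)
  also have "\<dots> \<approx>\<^sub>F S \<circ> (T \<circ> S')"
    by (rule eq_mod_finite_rank_compose_right[OF eq_mod_finite_rank_sym[OF drazin_mod_finite_rank_left[OF S]]
          Vector_Spaces.linear_compose[OF linear_S' T]])
  finally have 1: "S \<approx>\<^sub>F S \<circ> T \<circ> S'" by (simp add: o_assoc)
  have "S' \<approx>\<^sub>F T ^^ m \<circ> S' ^^ Suc m" by (rule drazin_mod_finite_rank_right[OF S'])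
  also have "\<dots> \<approx>\<^sub>F (S \<circ> T ^^ Suc m) \<circ> S' ^^ Suc m"
    by (rule eq_mod_finite_rank_compose_right[OF drazin_mod_finite_rank_funpow_left[OF S]
          clinear_funpow[OF linear_S']]) (simp add: m_def)
  also have "(S \<circ> T ^^ Suc m) \<circ> S' ^^ Suc m = (S \<circ> T) \<circ> (T ^^ m \<circ> S' ^^ Suc m)"
    by (simp add: o_assoc)
  also have "\<dots> \<approx>\<^sub>F (S \<circ> T) \<circ> S'"
    by (rule eq_mod_finite_rank_compose_left[OF eq_mod_finite_rank_sym[OF drazin_mod_finite_rank_right[OF S']]
          Vector_Spaces.linear_compose[OF T linear_S]])
  finally have 2: "S' \<approx>\<^sub>F S \<circ> T \<circ> S'" .
  show ?thesis using 1 eq_mod_finite_rank_sym[OF 2] by (rule eq_mod_finite_rank_trans)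
qed

lemma alg_trace_commutator_cong:
  assumes T: "clinear T" and SS': "S \<approx>\<^sub>F S'" and comm: "alg_finite_rank (\<lambda>x. T (S' x) - S' (T x))"
  shows "alg_trace (\<lambda>x. T (S x) - S (T x)) = alg_trace (\<lambda>x. T (S' x) - S' (T x))"
proof -
  have D: "alg_finite_rank (\<lambda>x. S x - S' x)" using SS' by (simp add: eq_mod_finite_rank_def)
  have TD: "alg_finite_rank (\<lambda>x. T (S x - S' x))" by (rule alg_finite_rank_compose_left[OF D T])
  have DT: "alg_finite_rank (\<lambda>x. S (T x) - S' (T x))" by (rule alg_finite_rank_compose_right[OF D T])
  have "(\<lambda>x. T (S x) - S (T x)) =
      (\<lambda>x. ((T (S' x) - S' (T x)) + T (S x - S' x)) - (S (T x) - S' (T x)))"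
    using clin.linear_diff[OF T] by (auto simp: algebra_simps)
  then have "alg_trace (\<lambda>x. T (S x) - S (T x)) =
      alg_trace (\<lambda>x. T (S' x) - S' (T x)) + alg_trace (\<lambda>x. T (S x - S' x))
      - alg_trace (\<lambda>x. S (T x) - S' (T x))"
    using alg_trace_diff[OF alg_finite_rank_add[OF comm TD] DT] alg_trace_add[OF comm TD] by simp
  moreover have "alg_trace (\<lambda>x. S (T x) - S' (T x)) = alg_trace (\<lambda>x. T (S x - S' x))"
    using alg_trace_commute[OF D T] by simp
  ultimately show ?thesis by simp
qed

section \<open>Projections along a basis\<close>

text \<open>For independent \<open>B\<close> and \<open>E \<subseteq> B\<close>: the projection onto \<open>span E\<close> that vanishes on
  \<open>B - E\<close> and (by the construction of \<open>clin.construct\<close>) on a complement of \<open>span B\<close>.\<close>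

definition basis_proj :: "'a::complex_normed_vector set \<Rightarrow> 'a set \<Rightarrow> 'a \<Rightarrow> 'a" where
  "basis_proj B E = clin.construct B (\<lambda>b. if b \<in> E then b else 0)"

lemma clinear_basis_proj: "cvs.independent B \<Longrightarrow> clinear (basis_proj B E)"
  unfolding basis_proj_def by (rule clin.linear_construct)

lemma basis_proj_eq_sum:
  assumes B: "cvs.independent B" and E: "E \<subseteq> B" "finite E"
  shows "basis_proj B E x = (\<Sum>e\<in>E. cvs.representation (cvs.extend_basis B) x e *\<^sub>C e)"
proof -
  let ?X = "cvs.extend_basis B"
  have X: "cvs.independent ?X" "cvs.span ?X = UNIV"
    using cvs.independent_extend_basis[OF B] cvs.span_extend_basis[OF B] .
  have rhs_linear: "clinear (\<lambda>x. \<Sum>e\<in>E. cvs.representation ?X x e *\<^sub>C e)"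
    using X by (auto simp: clinear_iff cvs.representation_add cvs.representation_scale sum.distrib
        cvs.scale_left_distrib cvs.scale_sum_right)
  show ?thesis
  proof (rule clin.linear_eq_on[OF clinear_basis_proj[OF B] rhs_linear])
    show "x \<in> cvs.span ?X" using X by simp
  next
    fix b assume b: "b \<in> ?X"
    have "(\<Sum>e\<in>E. cvs.representation ?X b e *\<^sub>C e) = (if b \<in> E then b else 0)"
      using E(2) by (simp add: cvs.representation_basis[OF X(1) b] if_distrib[of "\<lambda>c. c *\<^sub>C _"]
          sum.delta cong: if_cong)
    moreover have "basis_proj B E b = (if b \<in> E then b else 0)"
    proof (cases "b \<in> B")
      case True then show ?thesis unfolding basis_proj_def by (simp add: clin.construct_basis[OF B])
    next
      case False
      then have "b \<in> cvs.span (?X - B)" using b by (intro cvs.span_base) auto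
      then show ?thesis using False E(1) unfolding basis_proj_def by (auto simp: clin.construct_outside[OF B])
    qed
    ultimately show "basis_proj B E b = (\<Sum>e\<in>E. cvs.representation ?X b e *\<^sub>C e)" by simp
  qed
qed

lemma basis_proj_in_span:
  assumes "cvs.independent B" "E \<subseteq> B" "finite E"
  shows "basis_proj B E x \<in> cvs.span E"
  unfolding basis_proj_eq_sum[OF assms] by (intro cvs.span_sum cvs.span_scale cvs.span_base) auto

lemma alg_finite_rank_basis_proj:
  assumes "cvs.independent B" "E \<subseteq> B" "finite E"
  shows "alg_finite_rank (basis_proj B E)"
  using clinear_basis_proj[OF assms(1)] basis_proj_in_span[OF assms] assms(3)
  unfolding alg_finite_rank_def by blast

lemma basis_proj_ident:
  assumes "cvs.independent B" "E \<subseteq> B" "x \<in> cvs.span E"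
  shows "basis_proj B E x = x"
  using assms by (intro clin.linear_eq_on[OF clinear_basis_proj cvs.linear_ident, of B x E])
    (auto simp: basis_proj_def clin.construct_basis)

lemma basis_proj_zero:
  assumes "cvs.independent B" "x \<in> cvs.span (B - E)"
  shows "basis_proj B E x = 0"
  using assms by (intro clin.linear_eq_on[OF clinear_basis_proj clin.linear_zero, of B x "B - E"])
    (auto simp: basis_proj_def clin.construct_basis)

lemma alg_trace_basis_proj:
  assumes B: "cvs.independent B" and E: "E \<subseteq> B" "finite E"
  shows "alg_trace (basis_proj B E) = of_nat (card E)"
proof -
  let ?X = "cvs.extend_basis B"
  have X: "cvs.independent ?X" "cvs.span ?X = UNIV" "B \<subseteq> ?X"
    using cvs.independent_extend_basis[OF B] cvs.span_extend_basis[OF B] cvs.extend_basis_superset[OF B] .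
  obtain h where h: "bij_betw h {..<card E} E"
    using ex_bij_betw_nat_finite[OF E(2)] by (auto simp: atLeast0LessThan)
  have "rank_repr (basis_proj B E) (card E) h (\<lambda>i x. cvs.representation ?X x (h i))"
    unfolding rank_repr_def basis_proj_eq_sum[OF B E]
    using sum.reindex_bij_betw[OF h, of "\<lambda>e. cvs.representation ?X _ e *\<^sub>C e"]
      cfunctional_representation[OF cvs.linear_ident X(1)] X(2) by auto
  then have "alg_trace (basis_proj B E) = (\<Sum>i<card E. cvs.representation ?X (h i) (h i))"
    by (rule alg_trace_eq)
  also have "\<dots> = (\<Sum>i<card E. 1)"
  proof (rule sum.cong)
    fix i assume "i \<in> {..<card E}"
    then have "h i \<in> ?X" using h E X(3) by (auto simp: bij_betw_def)
    then show "cvs.representation ?X (h i) (h i) = 1" by (simp add: cvs.representation_basis[OF X(1)])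
  qed simp
  finally show ?thesis by simp
qed

section \<open>Fredholm operators on an invariant subspace\<close>

locale inverse_mod_finite_rank_on =
  fixes T G P Q :: "'a::complex_normed_vector \<Rightarrow> 'a" and M :: "'a set"
  assumes linear_T: "clinear T" and linear_G: "clinear G"
    and finite_rank_P: "alg_finite_rank P" and finite_rank_Q: "alg_finite_rank Q"
    and T_into: "\<And>x. x \<in> M \<Longrightarrow> T x \<in> M" and G_into: "\<And>y. G y \<in> M"
    and P_into: "\<And>x. P x \<in> M" and Q_into: "\<And>x. Q x \<in> M"
    and left_inverse: "\<And>x. x \<in> M \<Longrightarrow> G (T x) = x - P x"
    and right_inverse: "\<And>y. y \<in> M \<Longrightarrow> T (G y) = y - Q y"
begin

lemma linear_funpow_T: "clinear (T ^^ j)" and linear_funpow_G: "clinear (G ^^ j)"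
  using clinear_funpow linear_T linear_G by blast+

lemma funpow_T_into: "x \<in> M \<Longrightarrow> (T ^^ j) x \<in> M"
  by (induction j) (simp_all add: T_into)

lemma funpow_G_into: "y \<in> M \<Longrightarrow> (G ^^ j) y \<in> M"
  by (induction j) (simp_all add: G_into)

lemma funpow_left_inverse:
  assumes "x \<in> M"
  shows "(G ^^ j) ((T ^^ j) x) = x - (\<Sum>i<j. (G ^^ i) (P ((T ^^ i) x)))"
proof (induction j)
  case (Suc j)
  have "(G ^^ Suc j) ((T ^^ Suc j) x) = (G ^^ j) ((T ^^ j) x - P ((T ^^ j) x))"
    using left_inverse[OF funpow_T_into[OF assms]] by (simp add: funpow_swap1)
  then show ?case using Suc by (simp add: clin.linear_diff[OF linear_funpow_G])
qed simp

lemma funpow_right_inverse: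
  assumes "y \<in> M"
  shows "(T ^^ j) ((G ^^ j) y) = y - (\<Sum>i<j. (T ^^ i) (Q ((G ^^ i) y)))"
proof (induction j)
  case (Suc j)
  have "(T ^^ Suc j) ((G ^^ Suc j) y) = (T ^^ j) ((G ^^ j) y - Q ((G ^^ j) y))"
    using right_inverse[OF funpow_G_into[OF assms]] by (simp add: funpow_swap1)
  then show ?case using Suc by (simp add: clin.linear_diff[OF linear_funpow_T])
qed simp

context
  fixes n :: nat
  assumes range_funpow_T: "range (T ^^ n) \<subseteq> M"
begin

definition drazin_candidate :: "'a \<Rightarrow> 'a" where
  "drazin_candidate = G ^^ Suc n \<circ> T ^^ n"

lemma commutator_drazin_candidate:
  "T (drazin_candidate x) - drazin_candidate (T x) =
     (G ^^ n) (P ((T ^^ n) x)) - Q ((G ^^ n) ((T ^^ n) x))"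
proof -
  have Tn: "(T ^^ n) x \<in> M" using range_funpow_T by blast
  have "T (drazin_candidate x) = (G ^^ n) ((T ^^ n) x) - Q ((G ^^ n) ((T ^^ n) x))"
    using right_inverse[OF funpow_G_into[OF Tn]] by (simp add: drazin_candidate_def)
  moreover have "drazin_candidate (T x) = (G ^^ n) ((T ^^ n) x) - (G ^^ n) (P ((T ^^ n) x))"
    using left_inverse[OF Tn] by (simp add: drazin_candidate_def funpow_swap1 clin.linear_diff[OF linear_funpow_G])
  ultimately show ?thesis by simp
qed

lemma drazin_mod_finite_rank_candidate: "drazin_mod_finite_rank T drazin_candidate (Suc n)"
proof -
  define W where "W = (\<lambda>y. \<Sum>i<Suc n. (T ^^ i) (Q ((G ^^ i) y)))"
  have W: "alg_finite_rank W"
    unfolding W_def by (intro alg_finite_rank_sum alg_finite_rank_compose_left[OF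
        alg_finite_rank_compose_right[OF finite_rank_Q linear_funpow_G] linear_funpow_T])
  have "T \<circ> drazin_candidate \<approx>\<^sub>F drazin_candidate \<circ> T"
    unfolding eq_mod_finite_rank_def comp_def commutator_drazin_candidate
    by (intro alg_finite_rank_diff alg_finite_rank_compose_left[OF alg_finite_rank_compose_right[OF
          finite_rank_P linear_funpow_T] linear_funpow_G]
          alg_finite_rank_compose_right[OF finite_rank_Q clinear_compose[OF linear_funpow_G linear_funpow_T]])
  moreover have "drazin_candidate \<circ> T \<circ> drazin_candidate \<approx>\<^sub>F drazin_candidate"
  proof -
    have "drazin_candidate (T (drazin_candidate x)) - drazin_candidate x = - (G ^^ Suc n) (W ((T ^^ n) x))" for x
    proof -
      have "(T ^^ n) x \<in> M" using range_funpow_T by blast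
      then have "(T ^^ Suc n) ((G ^^ Suc n) ((T ^^ n) x)) = (T ^^ n) x - W ((T ^^ n) x)"
        unfolding W_def by (rule funpow_right_inverse)
      then show ?thesis
        by (simp add: drazin_candidate_def funpow_swap1 clin.linear_diff[OF linear_funpow_G]
            clin.linear_diff[OF linear_G])
    qed
    moreover have "alg_finite_rank (\<lambda>x. - (G ^^ Suc n) (W ((T ^^ n) x)))"
      by (intro alg_finite_rank_neg alg_finite_rank_compose_left[OF alg_finite_rank_compose_right[OF
            W linear_funpow_T] linear_funpow_G])
    ultimately show ?thesis by (simp add: eq_mod_finite_rank_def)
  qed
  moreover have "T ^^ Suc n \<circ> drazin_candidate \<circ> T \<approx>\<^sub>F T ^^ Suc n"
  proof -
    have "(T ^^ Suc n) (drazin_candidate (T x)) - (T ^^ Suc n) x = - W ((T ^^ Suc n) x)" for x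
    proof -
      have "(T ^^ Suc n) x \<in> M" using range_funpow_T T_into by auto
      then have "(T ^^ Suc n) ((G ^^ Suc n) ((T ^^ Suc n) x)) = (T ^^ Suc n) x - W ((T ^^ Suc n) x)"
        unfolding W_def by (rule funpow_right_inverse)
      then show ?thesis by (simp add: drazin_candidate_def funpow_swap1)
    qed
    moreover have "alg_finite_rank (\<lambda>x. - W ((T ^^ Suc n) x))"
      by (intro alg_finite_rank_neg alg_finite_rank_compose_right[OF W linear_funpow_T])
    ultimately show ?thesis by (simp add: eq_mod_finite_rank_def)
  qed
  moreover have "clinear drazin_candidate"
    unfolding drazin_candidate_def by (rule Vector_Spaces.linear_compose[OF linear_funpow_T linear_funpow_G])
  ultimately show ?thesis
    unfolding drazin_mod_finite_rank_def using linear_T by (intro conjI)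
qed

text \<open>Both commutator terms are, up to cyclic permutation, \<open>P\<close> resp. \<open>Q\<close> minus the same sum of
  traces, which therefore cancels.\<close>

lemma alg_trace_commutator_drazin_candidate:
  "alg_trace (\<lambda>x. T (drazin_candidate x) - drazin_candidate (T x)) = alg_trace P - alg_trace Q"
proof -
  have linear_P: "clinear P" and linear_Q: "clinear Q"
    using finite_rank_P finite_rank_Q by (simp_all add: alg_finite_rank_def)
  define R where "R i = (\<lambda>x. (T ^^ i) (Q ((G ^^ i) (P x))))" for i
  define R' where "R' i = (\<lambda>x. (G ^^ i) (P ((T ^^ i) (Q x))))" for i
  have GP: "alg_finite_rank (\<lambda>x. (G ^^ i) (P x))" for i
    by (rule alg_finite_rank_compose_left[OF finite_rank_P linear_funpow_G])
  have R: "alg_finite_rank (R i)" for i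
    unfolding R_def by (intro alg_finite_rank_compose_left[OF alg_finite_rank_compose_right[OF
          alg_finite_rank_compose_right[OF finite_rank_Q linear_funpow_G] linear_P] linear_funpow_T])
  have R': "alg_finite_rank (R' i)" for i
    unfolding R'_def by (rule alg_finite_rank_compose_right[OF GP clinear_compose[OF linear_funpow_T linear_Q]])
  have "alg_trace (\<lambda>x. (G ^^ n) (P ((T ^^ n) x))) = alg_trace (\<lambda>x. (T ^^ n) ((G ^^ n) (P x)))"
    by (rule alg_trace_commute[OF GP linear_funpow_T])
  also have "(\<lambda>x. (T ^^ n) ((G ^^ n) (P x))) = (\<lambda>x. P x - (\<Sum>i<n. R i x))"
    unfolding R_def using funpow_right_inverse[OF P_into] by simp
  also have "alg_trace \<dots> = alg_trace P - (\<Sum>i<n. alg_trace (R i))"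
    by (simp add: alg_trace_diff[OF finite_rank_P alg_finite_rank_sum[OF R]] alg_trace_sum[OF _ R])
  finally have 1: "alg_trace (\<lambda>x. (G ^^ n) (P ((T ^^ n) x))) = alg_trace P - (\<Sum>i<n. alg_trace (R i))" .
  have "alg_trace (\<lambda>x. Q ((G ^^ n) ((T ^^ n) x))) = alg_trace (\<lambda>x. (G ^^ n) ((T ^^ n) (Q x)))"
    by (rule alg_trace_commute[OF finite_rank_Q clinear_compose[OF linear_funpow_G linear_funpow_T]])
  also have "(\<lambda>x. (G ^^ n) ((T ^^ n) (Q x))) = (\<lambda>x. Q x - (\<Sum>i<n. R' i x))"
    unfolding R'_def using funpow_left_inverse[OF Q_into] by simp
  also have "alg_trace \<dots> = alg_trace Q - (\<Sum>i<n. alg_trace (R' i))"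
    by (simp add: alg_trace_diff[OF finite_rank_Q alg_finite_rank_sum[OF R']] alg_trace_sum[OF _ R'])
  also have "(\<Sum>i<n. alg_trace (R' i)) = (\<Sum>i<n. alg_trace (R i))"
    unfolding R_def R'_def
    using alg_trace_commute[OF GP clinear_compose[OF linear_funpow_T linear_Q]] by simp
  finally have 2: "alg_trace (\<lambda>x. Q ((G ^^ n) ((T ^^ n) x))) = alg_trace Q - (\<Sum>i<n. alg_trace (R i))" .
  have "alg_trace (\<lambda>x. T (drazin_candidate x) - drazin_candidate (T x)) =
      alg_trace (\<lambda>x. (G ^^ n) (P ((T ^^ n) x))) - alg_trace (\<lambda>x. Q ((G ^^ n) ((T ^^ n) x)))"
    unfolding commutator_drazin_candidate
    by (intro alg_trace_diff alg_finite_rank_compose_right[OF GP linear_funpow_T]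
        alg_finite_rank_compose_right[OF finite_rank_Q clinear_compose[OF linear_funpow_G linear_funpow_T]])
  then show ?thesis using 1 2 by simp
qed

end

end

lemma codim_in_span_basis:
  assumes B: "cvs.independent B" and A: "A \<subseteq> B" and fin: "finite (B - A)"
  shows "codim_in (cvs.span B) (cvs.span A) = card (B - A)"
  unfolding codim_in_def cspan_eq
proof (rule Least_equality)
  have "cvs.span B = {r + c |r c. r \<in> cvs.span A \<and> c \<in> cvs.span (B - A)}"
    using cvs.span_Un[of A "B - A"] A by (simp add: Un_absorb1)
  then show "\<exists>C. finite C \<and> card C = card (B - A) \<and>
      cvs.span B = {r + c |r c. r \<in> cvs.span A \<and> c \<in> cvs.span C}"
    using fin by blast
next
  fix d assume "\<exists>C. finite C \<and> card C = d \<and> cvs.span B = {r + c |r c. r \<in> cvs.span A \<and> c \<in> cvs.span C}"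
  then obtain C where C: "finite C" "card C = d"
    "cvs.span B = {r + c |r c. r \<in> cvs.span A \<and> c \<in> cvs.span C}" by blast
  let ?Q = "basis_proj B (B - A)"
  have "B - A \<subseteq> cvs.span (?Q ` C)"
  proof
    fix b assume b: "b \<in> B - A"
    then obtain r c where rc: "b = r + c" "r \<in> cvs.span A" "c \<in> cvs.span C"
      using C(3) cvs.span_base[of b B] by blast
    have "b = ?Q b" using basis_proj_ident[OF B _ cvs.span_base[OF b]] by simp
    also have "\<dots> = ?Q c"
      using rc basis_proj_zero[OF B, of r "B - A"] A clin.linear_add[OF clinear_basis_proj[OF B]]
      by (simp add: Diff_Diff_Int Int_absorb1)
    finally show "b \<in> cvs.span (?Q ` C)"
      using clin.linear_span_image[OF clinear_basis_proj[OF B, of "B - A"], of C] rc(3) by auto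
  qed
  then have "card (B - A) \<le> card (?Q ` C)"
    using cvs.independent_span_bound[of "?Q ` C" "B - A"] C(1) cvs.independent_mono[OF B] by auto
  also have "\<dots> \<le> d" using card_image_le[OF C(1)] C(2) by simp
  finally show "card (B - A) \<le> d" .
qed

lemma inj_on_span_basis_complement:
  assumes T: "clinear T" and B: "cvs.independent B" "Bk \<subseteq> B"
    and kernel: "cvs.span Bk = {x \<in> cvs.span B. T x = 0}"
  shows "inj_on T (cvs.span (B - Bk))"
proof (rule clin.linear_inj_on_iff_eq_0[OF T cvs.subspace_span, THEN iffD2], intro ballI impI)
  fix x assume x: "x \<in> cvs.span (B - Bk)" "T x = 0"
  then have "x \<in> cvs.span Bk" using kernel cvs.span_mono[of "B - Bk" B] by auto
  then have "cvs.representation B x = cvs.representation Bk x"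
    "cvs.representation B x = cvs.representation (B - Bk) x"
    using x(1) B by (auto intro!: cvs.representation_extend)
  then have "cvs.representation B x = (\<lambda>_. 0)"
    using cvs.representation_ne_zero[of Bk x] cvs.representation_ne_zero[of "B - Bk" x] by auto
  then show "x = 0"
    using cvs.sum_nonzero_representation_eq[OF B(1), of x] x(1) cvs.span_mono[of "B - Bk" B] by auto
qed

lemma left_inverse_mod_kernel:
  assumes T: "clinear T" and M: "cvs.subspace M"
    and K: "finite BK" "cvs.span BK = {x \<in> M. T x = 0}"
  obtains G P where "clinear G" "\<And>y. G y \<in> M" "alg_finite_rank P" "\<And>x. P x \<in> M"
    "\<And>x. x \<in> M \<Longrightarrow> G (T x) = x - P x" "\<And>y. y \<in> T ` M \<Longrightarrow> T (G y) = y"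
    "alg_trace P = of_nat (cdim {x \<in> M. T x = 0})"
proof -
  define K where "K = {x \<in> M. T x = 0}"
  obtain Bk where Bk: "Bk \<subseteq> K" "cvs.independent Bk" "K \<subseteq> cvs.span Bk"
    using cvs.maximal_independent_subset by blast
  have span_K: "cvs.span K = K" using K(2) cvs.span_span[of BK] by (simp add: K_def)
  have span_Bk: "cvs.span Bk = K" using Bk(3) cvs.span_mono[OF Bk(1)] span_K by auto
  have fin_Bk: "finite Bk"
    using cvs.independent_span_bound[OF K(1) Bk(2)] Bk(1) K(2) by (auto simp: K_def)
  obtain B where B: "Bk \<subseteq> B" "B \<subseteq> M" "cvs.independent B" "M \<subseteq> cvs.span B"
    using cvs.maximal_independent_subset_extend[of Bk M] Bk by (auto simp: K_def)
  have span_B: "cvs.span B = M" using B cvs.span_minimal[OF B(2) M] by auto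
  define Bw where "Bw = B - Bk"
  have span_Bw: "cvs.span Bw \<subseteq> M" using span_B cvs.span_mono[of Bw B] by (auto simp: Bw_def)
  have decompose: "\<exists>k w. x = k + w \<and> k \<in> K \<and> w \<in> cvs.span Bw" if "x \<in> M" for x
    using that cvs.span_Un[of Bk Bw] span_B span_Bk B(1) by (auto simp: Bw_def Un_absorb1)
  have "inj_on T (cvs.span Bw)"
    unfolding Bw_def using span_B span_Bk B(1,3)
    by (intro inj_on_span_basis_complement[OF T]) (auto simp: K_def)
  then obtain G where G: "range G \<subseteq> cvs.span Bw" "clinear G" "\<And>w. w \<in> cvs.span Bw \<Longrightarrow> G (T w) = w"
    using clin.linear_exists_left_inverse_on[OF T cvs.subspace_span] by blast
  define P where "P = basis_proj B Bk"
  have P_K: "P k = k" if "k \<in> K" for k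
    unfolding P_def using that span_Bk by (intro basis_proj_ident[OF B(3) B(1)]) auto
  have P_Bw: "P w = 0" if "w \<in> cvs.span Bw" for w
    unfolding P_def using that by (intro basis_proj_zero[OF B(3)]) (simp add: Bw_def)
  show thesis
  proof
    show "clinear G" "G y \<in> M" for y using G span_Bw by auto
    show "alg_finite_rank P" unfolding P_def by (rule alg_finite_rank_basis_proj[OF B(3,1) fin_Bk])
    show "P x \<in> M" for x
      using basis_proj_in_span[OF B(3,1) fin_Bk] span_Bk by (auto simp: P_def K_def)
    show "G (T x) = x - P x" if x: "x \<in> M" for x
    proof -
      obtain k w where "x = k + w" "k \<in> K" "w \<in> cvs.span Bw" using decompose[OF x] by blast
      then show ?thesis
        using G(3) P_K P_Bw clin.linear_add[OF T] clin.linear_add[OF clinear_basis_proj[OF B(3)]]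
        by (auto simp: K_def P_def)
    qed
    show "T (G y) = y" if y: "y \<in> T ` M" for y
    proof -
      obtain k w where "y = T (k + w)" "k \<in> K" "w \<in> cvs.span Bw" using decompose y by blast
      then show ?thesis using G(3) clin.linear_add[OF T] by (auto simp: K_def)
    qed
    have "cdim K = card Bk"
      unfolding cdim_def using cvs.dim_span_eq_card_independent[OF Bk(2)] span_Bk by simp
    then show "alg_trace P = of_nat (cdim {x \<in> M. T x = 0})"
      unfolding P_def K_def[symmetric] by (simp add: alg_trace_basis_proj[OF B(3,1) fin_Bk])
  qed
qed

lemma projection_onto_complement:
  assumes M: "cvs.subspace M" and R: "cvs.subspace R" "R \<subseteq> M"
    and C: "finite C" "M = {r + c |r c. r \<in> R \<and> c \<in> cvs.span C}"
  obtains Q where "alg_finite_rank Q" "\<And>x. Q x \<in> M" "\<And>r. r \<in> R \<Longrightarrow> Q r = 0"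
    "\<And>y. y \<in> M \<Longrightarrow> y - Q y \<in> R" "alg_trace Q = of_nat (codim_in M R)"
proof -
  obtain A where A: "A \<subseteq> R" "cvs.independent A" "R \<subseteq> cvs.span A"
    using cvs.maximal_independent_subset by blast
  have span_A: "cvs.span A = R" using A cvs.span_minimal[OF A(1) R(1)] by auto
  have span_C: "cvs.span C \<subseteq> M"
    using C(2) cvs.span_zero[of A] span_A by force
  obtain B where B: "A \<subseteq> B" "B \<subseteq> A \<union> C" "cvs.independent B" "A \<union> C \<subseteq> cvs.span B"
    using cvs.maximal_independent_subset_extend[of A "A \<union> C"] A(2) by blast
  define D where "D = B - A"
  have fin_D: "finite D" using B(2) C(1) finite_subset[of D C] by (auto simp: D_def)
  have span_B: "cvs.span B = M"
  proof
    show "cvs.span B \<subseteq> M"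
      using B(2) A(1) R(2) span_C cvs.span_superset[of C] cvs.span_minimal[OF _ M, of B] by blast
    show "M \<subseteq> cvs.span B"
      using C(2) B(4) span_A cvs.span_mono[of A B] B(1) cvs.span_minimal[of C "cvs.span B"]
      by (force intro: cvs.span_add)
  qed
  define Q where "Q = basis_proj B D"
  have Q_R: "Q r = 0" if "r \<in> R" for r
    unfolding Q_def using that span_A B(1) by (intro basis_proj_zero[OF B(3)]) (auto simp: D_def Diff_Diff_Int Int_absorb1)
  show thesis
  proof
    show "alg_finite_rank Q" unfolding Q_def by (rule alg_finite_rank_basis_proj[OF B(3) _ fin_D]) (auto simp: D_def)
    show "Q x \<in> M" for x
      using basis_proj_in_span[OF B(3) _ fin_D, of x] cvs.span_mono[of D B] span_B by (auto simp: Q_def D_def)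
    show "Q r = 0" if "r \<in> R" for r using Q_R[OF that] .
    show "y - Q y \<in> R" if y: "y \<in> M" for y
    proof -
      obtain a d where "y = a + d" "a \<in> R" "d \<in> cvs.span D"
        using y span_B cvs.span_Un[of A D] span_A B(1) by (auto simp: D_def Un_absorb1)
      then show ?thesis
        using Q_R basis_proj_ident[OF B(3) _, of D d] clin.linear_add[OF clinear_basis_proj[OF B(3), of D]]
        by (auto simp: Q_def D_def)
    qed
    show "alg_trace Q = of_nat (codim_in M R)"
      using codim_in_span_basis[OF B(3,1)] alg_trace_basis_proj[OF B(3) _ fin_D] fin_D span_A span_B
      by (auto simp: Q_def D_def)
  qed
qed

lemma fredholm_on_inverse_mod_finite_rank:
  assumes T: "clinear T" and M: "cvs.subspace M" and fredholm: "fredholm_on M T"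
  obtains G P Q where "inverse_mod_finite_rank_on T G P Q M"
    and "alg_trace P - alg_trace Q = of_int (index_on M T)"
proof -
  obtain BK C where TM: "T ` M \<subseteq> M" and K: "finite BK" "cvs.span BK = {x \<in> M. T x = 0}"
    and C: "finite C" "M = {r + c |r c. r \<in> T ` M \<and> c \<in> cvs.span C}"
    using fredholm unfolding fredholm_on_def cspan_eq by blast
  obtain G0 P where G0: "clinear G0" "\<And>y. G0 y \<in> M" and P: "alg_finite_rank P" "\<And>x. P x \<in> M"
    and G0_left: "\<And>x. x \<in> M \<Longrightarrow> G0 (T x) = x - P x" and G0_right: "\<And>y. y \<in> T ` M \<Longrightarrow> T (G0 y) = y"
    and trace_P: "alg_trace P = of_nat (cdim {x \<in> M. T x = 0})"
    using left_inverse_mod_kernel[OF T M K] by blast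
  obtain Q where Q: "alg_finite_rank Q" "\<And>x. Q x \<in> M" and Q_range: "\<And>r. r \<in> T ` M \<Longrightarrow> Q r = 0"
    and Q_compl: "\<And>y. y \<in> M \<Longrightarrow> y - Q y \<in> T ` M" and trace_Q: "alg_trace Q = of_nat (codim_in M (T ` M))"
    using projection_onto_complement[OF M clin.linear_subspace_image[OF T M] TM C] by blast
  define G where "G y = G0 (y - Q y)" for y
  have "inverse_mod_finite_rank_on T G P Q M"
  proof (rule inverse_mod_finite_rank_on.intro)
    have "clinear Q" using Q(1) by (simp add: alg_finite_rank_def)
    then show "clinear G"
      unfolding G_def[abs_def] by (rule clinear_compose[OF G0(1) clin.linear_compose_sub[OF cvs.linear_ident]])
    show "G (T x) = x - P x" if "x \<in> M" for x
      using that Q_range G0_left by (simp add: G_def)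
    show "T (G y) = y - Q y" if "y \<in> M" for y
      using G0_right[OF Q_compl[OF that]] by (simp add: G_def)
  qed (use T TM G0 P Q in \<open>auto simp: G_def\<close>)
  moreover have "alg_trace P - alg_trace Q = of_int (index_on M T)"
    unfolding index_on_def trace_P trace_Q by simp
  ultimately show thesis ..
qed

section \<open>Continuity of coordinate functionals\<close>

lemma bounded_linear_scaleC_left: "bounded_linear (\<lambda>c. c *\<^sub>C (a::'a::complex_normed_vector))"
proof (rule bounded_linear_intro[where K = "norm a"])
  show "(r *\<^sub>R c) *\<^sub>C a = r *\<^sub>R (c *\<^sub>C a)" for r c
    by (metis scaleC_of_real scaleC_scaleC scaleR_conv_of_real)
qed (simp_all add: scaleC_add_left norm_scaleC)

lemma norm_ge_infdist_span:
  assumes "u \<in> cvs.span E"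
  shows "cmod c * infdist a (cvs.span E) \<le> norm (u + c *\<^sub>C (a::'a::complex_normed_vector))"
proof (cases "c = 0")
  case False
  have "- ((1 / c) *\<^sub>C u) \<in> cvs.span E" using assms by (intro cvs.span_neg cvs.span_scale)
  then have "infdist a (cvs.span E) \<le> norm (a + (1 / c) *\<^sub>C u)"
    using infdist_le[of "- ((1 / c) *\<^sub>C u)" "cvs.span E" a] by (simp add: dist_norm)
  moreover have "u + c *\<^sub>C a = c *\<^sub>C (a + (1 / c) *\<^sub>C u)"
    using False by (simp add: scaleC_add_right scaleC_scaleC)
  ultimately show ?thesis by (simp add: norm_scaleC mult_left_mono)
qed simp

context
  fixes E :: "'a::complex_normed_vector set" and a :: 'a
  assumes closed: "closed (cvs.span E)" and a: "a \<notin> cvs.span E"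
begin

private lemma infdist_pos: "infdist a (cvs.span E) > 0"
proof -
  have "cvs.span E \<noteq> {}" using cvs.span_zero by blast
  then have "infdist a (cvs.span E) \<noteq> 0" using a in_closed_iff_infdist_zero[OF closed] by blast
  then show ?thesis by (simp add: order_less_le infdist_nonneg)
qed

text \<open>The coefficient of \<open>a\<close> along a convergent sequence in \<open>span (insert a E)\<close> is Cauchy,
  because its increments are bounded by the norm increments divided by \<open>infdist a (span E)\<close>.\<close>

lemma closed_span_insert: "closed (cvs.span (insert a E))"
  unfolding closed_sequential_limits
proof (intro allI impI, elim conjE)
  fix x l assume x: "\<forall>n. x n \<in> cvs.span (insert a E)" and lim_x: "x \<longlonglongrightarrow> l"
  define d where "d = infdist a (cvs.span E)"
  obtain c where c: "\<And>n. x n - c n *\<^sub>C a \<in> cvs.span E"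
    using x by (simp add: cvs.span_insert) metis
  have dist_c: "norm (c i - c j) * d \<le> dist (x i) (x j)" for i j
  proof -
    have "x i - x j = (x i - c i *\<^sub>C a - (x j - c j *\<^sub>C a)) + (c i - c j) *\<^sub>C a"
      by (simp add: cvs.scale_left_diff_distrib)
    then show ?thesis
      unfolding d_def dist_norm using norm_ge_infdist_span[OF cvs.span_diff[OF c c]] by metis
  qed
  have "Cauchy c"
  proof (rule metric_CauchyI)
    fix e :: real assume "e > 0"
    then obtain N where N: "\<And>m n. m \<ge> N \<Longrightarrow> n \<ge> N \<Longrightarrow> dist (x m) (x n) < e * d"
      using LIMSEQ_imp_Cauchy[OF lim_x] infdist_pos by (metis d_def metric_CauchyD mult_pos_pos)
    have "dist (c m) (c n) < e" if "m \<ge> N" "n \<ge> N" for m n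
    proof -
      have "dist (c m) (c n) * d < e * d" using dist_c[of m n] N[OF that] by (simp add: dist_norm)
      then show ?thesis using infdist_pos by (simp add: d_def)
    qed
    then show "\<exists>M. \<forall>m\<ge>M. \<forall>n\<ge>M. dist (c m) (c n) < e" by blast
  qed
  then obtain c0 where "c \<longlonglongrightarrow> c0" using Cauchy_convergent_iff convergent_def by blast
  then have "(\<lambda>n. x n - c n *\<^sub>C a) \<longlonglongrightarrow> l - c0 *\<^sub>C a"
    by (intro tendsto_diff lim_x bounded_linear.tendsto[OF bounded_linear_scaleC_left])
  then have "l - c0 *\<^sub>C a \<in> cvs.span E" by (rule closed_sequentially[OF closed c])
  then show "l \<in> cvs.span (insert a E)" by (auto simp: cvs.span_insert)
qed

lemma coefficient_bound_insert:
  assumes "finite E" "a \<notin> E" and K: "K \<ge> 0" "\<And>c e. e \<in> E \<Longrightarrow> cmod (c e) \<le> K * norm (\<Sum>e\<in>E. c e *\<^sub>C e)"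
  obtains K' where "K' \<ge> 0"
    "\<And>c e. e \<in> insert a E \<Longrightarrow> cmod (c e) \<le> K' * norm (\<Sum>e\<in>insert a E. c e *\<^sub>C e)"
proof
  define d where "d = infdist a (cvs.span E)"
  have d: "d > 0" using infdist_pos by (simp add: d_def)
  show "max (1 / d) (K * (1 + norm a / d)) \<ge> 0" using d by (simp add: le_max_iff_disj)
  fix c e assume e: "e \<in> insert a E"
  define u where "u = (\<Sum>e\<in>E. c e *\<^sub>C e)"
  define w where "w = (\<Sum>e\<in>insert a E. c e *\<^sub>C e)"
  have w: "w = u + c a *\<^sub>C a" using assms(1,2) by (simp add: w_def u_def add.commute)
  have u: "u \<in> cvs.span E" unfolding u_def by (intro cvs.span_sum cvs.span_scale cvs.span_base)
  have ca: "cmod (c a) \<le> norm w / d"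
    using norm_ge_infdist_span[OF u, of "c a" a] d w by (simp add: d_def field_simps)
  have "norm u \<le> norm w + cmod (c a) * norm a"
    using norm_triangle_ineq4[of w "c a *\<^sub>C a"] w by (simp add: norm_scaleC)
  also have "\<dots> \<le> norm w * (1 + norm a / d)"
    using mult_right_mono[OF ca norm_ge_zero[of a]] by (simp add: field_simps)
  finally have nu: "norm u \<le> norm w * (1 + norm a / d)" .
  show "cmod (c e) \<le> max (1 / d) (K * (1 + norm a / d)) * norm w"
  proof (cases "e = a")
    case True
    then have "cmod (c e) \<le> 1 / d * norm w" using ca by simp
    also have "\<dots> \<le> max (1 / d) (K * (1 + norm a / d)) * norm w" by (rule mult_right_mono) simp_all
    finally show ?thesis .
  next
    case False
    then have "cmod (c e) \<le> K * norm u"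
      using e K(2)[of e c] by (simp add: u_def)
    also have "\<dots> \<le> K * (1 + norm a / d) * norm w"
      using mult_left_mono[OF nu K(1)] by (simp add: ac_simps)
    also have "\<dots> \<le> max (1 / d) (K * (1 + norm a / d)) * norm w" by (rule mult_right_mono) simp_all
    finally show ?thesis .
  qed
qed

end

lemma closed_span_and_coefficient_bound:
  fixes E :: "'a::complex_normed_vector set"
  assumes "finite E" "cvs.independent E"
  shows "closed (cvs.span E) \<and> (\<exists>K\<ge>0. \<forall>c. \<forall>e\<in>E. cmod (c e) \<le> K * norm (\<Sum>e\<in>E. c e *\<^sub>C e))"
  using assms
proof (induction E rule: finite_induct)
  case (insert a E)
  then have "cvs.independent E" "a \<notin> cvs.span E" by (auto simp: cvs.independent_insert)
  with insert.IH obtain K where closed: "closed (cvs.span E)" and K: "K \<ge> 0"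
    "\<And>c e. e \<in> E \<Longrightarrow> cmod (c e) \<le> K * norm (\<Sum>e\<in>E. c e *\<^sub>C e)" by blast
  obtain K' where "K' \<ge> 0"
    "\<And>c e. e \<in> insert a E \<Longrightarrow> cmod (c e) \<le> K' * norm (\<Sum>e\<in>insert a E. c e *\<^sub>C e)"
    using coefficient_bound_insert[OF closed \<open>a \<notin> cvs.span E\<close> insert.hyps K] by blast
  then show ?case using closed_span_insert[OF closed \<open>a \<notin> cvs.span E\<close>] by blast
qed (auto simp: cvs.span_empty)

lemma representation_bounded:
  assumes "finite E" "cvs.independent E"
  obtains K where "K \<ge> 0"
    "\<And>w e. w \<in> cvs.span E \<Longrightarrow> e \<in> E \<Longrightarrow> cmod (cvs.representation E w e) \<le> K * norm w"
proof -
  obtain K where K0: "K \<ge> 0" and K: "\<And>c e. e \<in> E \<Longrightarrow> cmod (c e) \<le> K * norm (\<Sum>e\<in>E. c e *\<^sub>C e)"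
    using closed_span_and_coefficient_bound[OF assms] by blast
  have "cmod (cvs.representation E w e) \<le> K * norm w" if "w \<in> cvs.span E" "e \<in> E" for w e
    using K[OF that(2), of "cvs.representation E w"]
      cvs.sum_representation_eq[OF assms(2) that(1) assms(1) order_refl] by simp
  with K0 show thesis by (rule that)
qed

lemma cbounded_functional_representation:
  assumes F: "cbounded_linear F" and E: "finite E" "cvs.independent E" "range F \<subseteq> cvs.span E"
    and e: "e \<in> E"
  shows "cbounded_functional (\<lambda>x. cvs.representation E (F x) e)"
proof -
  have lin: "cfunctional (\<lambda>x. cvs.representation E (F x) e)"
    by (rule cfunctional_representation[OF cbounded_linear_clinear[OF F] E(2,3)])
  obtain K where K: "K \<ge> 0" "\<And>w. w \<in> cvs.span E \<Longrightarrow> cmod (cvs.representation E w e) \<le> K * norm w"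
    using representation_bounded[OF E(1,2)] e by metis
  have "bounded_linear F" using F by (simp add: cbounded_linear_def)
  then obtain KF where KF: "\<And>x. norm (F x) \<le> norm x * KF"
    using bounded_linear.bounded by blast
  show ?thesis
    unfolding cbounded_functional_def
  proof (intro conjI bounded_linear_intro[where K = "K * KF"])
    show "cvs.representation E (F (r *\<^sub>R x)) e = r *\<^sub>R cvs.representation E (F x) e" for r x
      using lin by (simp add: cfunctional_iff scaleC_of_real[symmetric] scaleR_conv_of_real)
    show "norm (cvs.representation E (F x) e) \<le> norm x * (K * KF)" for x
    proof -
      have "F x \<in> cvs.span E" using E(3) by auto
      then show ?thesis
        using order_trans[OF K(2) mult_left_mono[OF KF K(1)]] by (simp add: ac_simps)
    qed
  qed (use lin in \<open>simp_all add: cfunctional_iff\<close>)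
qed

lemma frank_trace_eq_alg_trace:
  assumes F: "finite_rank F"
  shows "frank_trace F = alg_trace F"
proof -
  have bl: "cbounded_linear F" and lin: "clinear F"
    using F cbounded_linear_clinear by (auto simp: finite_rank_def)
  obtain B where B: "finite B" "range F \<subseteq> cvs.span B" using F by (auto simp: finite_rank_def cspan_eq)
  obtain E where E: "E \<subseteq> range F" "cvs.independent E" "range F \<subseteq> cvs.span E"
    using cvs.maximal_independent_subset by blast
  have span_E: "cvs.span E = range F"
    using E cvs.span_minimal[OF E(1) clin.linear_subspace_image[OF lin cvs.subspace_UNIV]] by auto
  have fin_E: "finite E" using cvs.independent_span_bound[OF B(1) E(2)] E(1) B(2) by auto
  obtain h where h: "bij_betw h {..<card E} E"
    using ex_bij_betw_nat_finite[OF fin_E] by (auto simp: atLeast0LessThan)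
  define Witness where "Witness t \<longleftrightarrow> (\<exists>n (xs :: nat \<Rightarrow> 'a) (fs :: nat \<Rightarrow> 'a \<Rightarrow> complex).
      inj_on xs {..<n} \<and> cindependent (xs ` {..<n}) \<and> cspan (xs ` {..<n}) = range F \<and>
      (\<forall>i<n. cbounded_functional (fs i)) \<and> (\<forall>x. F x = (\<Sum>i<n. fs i x *\<^sub>C xs i)) \<and>
      t = (\<Sum>i<n. fs i (xs i)))" for t
  have "Witness (\<Sum>i<card E. cvs.representation E (F (h i)) (h i))"
    unfolding Witness_def
    using h E(2,3) span_E cbounded_functional_representation[OF bl fin_E E(2,3)]
      sum_representation_lessThan[OF E(2) h] bij_betwE[OF h]
    by (intro exI[of _ "card E"] exI[of _ h] exI[of _ "\<lambda>i x. cvs.representation E (F x) (h i)"])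
      (auto simp: bij_betw_def cindependent_def cspan_eq)
  then have "Witness (frank_trace F)"
    unfolding frank_trace_def Witness_def[symmetric] by (rule someI)
  then obtain n :: nat and xs fs where "\<forall>i<n. cbounded_functional (fs i)" "\<forall>x. F x = (\<Sum>i<n. fs i x *\<^sub>C xs i)"
    "frank_trace F = (\<Sum>i<n. fs i (xs i))"
    unfolding Witness_def by blast
  then show ?thesis
    using alg_trace_eq[of F n xs fs]
    by (auto simp: rank_repr_def cbounded_functional_def cfunctional_iff linear_add bounded_linear.linear)
qed

lemma finite_rank_alg_finite_rank: "finite_rank F \<Longrightarrow> alg_finite_rank F"
  unfolding finite_rank_def alg_finite_rank_def cspan_eq using cbounded_linear_clinear by blast

lemma drazin_inverse_mod_F0_imp_drazin_mod_finite_rank: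
  assumes "drazin_inverse_mod_F0 T S"
  obtains k where "drazin_mod_finite_rank T S k"
proof -
  obtain k where "finite_rank (\<lambda>x. (T ^^ k) (S (T x)) - (T ^^ k) x)"
    using assms by (auto simp: drazin_inverse_mod_F0_def)
  then have "drazin_mod_finite_rank T S k"
    using assms
    unfolding drazin_inverse_mod_F0_def drazin_mod_finite_rank_def eq_mod_finite_rank_def comp_def
    by (simp add: finite_rank_alg_finite_rank cbounded_linear_clinear)
  then show thesis ..
qed

lemma B_fredholm_inverse_mod_finite_rank:
  assumes "B_fredholm T"
  obtains n G P Q where "inverse_mod_finite_rank_on T G P Q (range (T ^^ n))"
    "alg_trace P - alg_trace Q = of_int (B_index T)"
proof -
  have T: "clinear T" using assms by (simp add: B_fredholm_def cbounded_linear_clinear)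
  define n where "n = (LEAST n. closed (range (T ^^ n)) \<and> fredholm_on (range (T ^^ n)) T)"
  have "fredholm_on (range (T ^^ n)) T"
    using assms LeastI_ex[of "\<lambda>n. closed (range (T ^^ n)) \<and> fredholm_on (range (T ^^ n)) T"]
    by (simp add: B_fredholm_def n_def)
  moreover have "B_index T = index_on (range (T ^^ n)) T" by (simp add: B_index_def n_def)
  ultimately show thesis
    using fredholm_on_inverse_mod_finite_rank[OF T
        clin.linear_subspace_image[OF clinear_funpow[OF T] cvs.subspace_UNIV]] that
    by metis
qed

theorem theorem2p5:
  fixes T S :: "'a::{complex_normed_vector, banach} \<Rightarrow> 'a"
  assumes "B_fredholm T"
    and "drazin_inverse_mod_F0 T S"
  shows "finite_rank (\<lambda>x. T (S x) - S (T x)) \<and>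
         of_int (B_index T) = frank_trace (\<lambda>x. T (S x) - S (T x))"
proof
  show commutator: "finite_rank (\<lambda>x. T (S x) - S (T x))"
    using assms(2) by (simp add: drazin_inverse_mod_F0_def)
  obtain k where S: "drazin_mod_finite_rank T S k"
    using drazin_inverse_mod_F0_imp_drazin_mod_finite_rank[OF assms(2)] .
  then have T: "clinear T" by (simp add: drazin_mod_finite_rank_def)
  obtain n G P Q where inv: "inverse_mod_finite_rank_on T G P Q (range (T ^^ n))"
    and index: "alg_trace P - alg_trace Q = of_int (B_index T)"
    using B_fredholm_inverse_mod_finite_rank[OF assms(1)] .
  define S0 where "S0 = inverse_mod_finite_rank_on.drazin_candidate T G n"
  have S0: "drazin_mod_finite_rank T S0 (Suc n)"
    unfolding S0_def
    by (rule inverse_mod_finite_rank_on.drazin_mod_finite_rank_candidate[OF inv order_refl])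
  have "frank_trace (\<lambda>x. T (S x) - S (T x)) = alg_trace (\<lambda>x. T (S0 x) - S0 (T x))"
    unfolding frank_trace_eq_alg_trace[OF commutator]
    by (rule alg_trace_commutator_cong[OF T drazin_mod_finite_rank_unique[OF S S0]])
      (use S0 in \<open>simp add: drazin_mod_finite_rank_def eq_mod_finite_rank_def comp_def\<close>)
  also have "\<dots> = of_int (B_index T)"
    unfolding S0_def index[symmetric]
    by (rule inverse_mod_finite_rank_on.alg_trace_commutator_drazin_candidate[OF inv order_refl])
  finally show "of_int (B_index T) = frank_trace (\<lambda>x. T (S x) - S (T x))" by simp
qed

end
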